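(* Let $W\in\mathbb{R}^{n\times n}$ be the signed adjacency matrix of a signed digraph with $W\mathbf{1}=\mathbf{1}$. If $W$ is eventually stochastic, or if $W$ is weight balanced ($W^\top\mathbf{1}=\mathbf{1}$) with the eigenvalue $1$ simple and strictly dominant, then $W$ is irreducible (equivalently, the digraph is strongly connected).
   Context: $W$ is a real matrix (entries of any sign); the digraph has an edge from $j$ to $i$ iff $W_{ij}\neq0$. $W$ is eventually positive if there is $t_0\in\mathbb{Z}_{\ge0}$ with $W^t$ entrywise positive for all integers $t\ge t_0$; eventually stochastic means eventually positive and $W\mathbf{1}=\mathbf{1}$. "The eigenvalue $1$ is simple and strictly dominant" means $1$ has algebraic multiplicity one and $|\lambda|<1$ for every other eigenvalue. $W$ is irreducible if there is no permutation matrix $P$ with $P^\top WP$ block upper triangular with two nontrivial square diagonal blocks. *)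

theory Defs
  imports "Jordan_Normal_Form.Char_Poly" "HOL-Computational_Algebra.Polynomial"
begin

definition ones_vec :: "nat \<Rightarrow> real vec" where
  "ones_vec n = vec n (\<lambda>_. 1)"

definition eventually_positive :: "nat \<Rightarrow> real mat \<Rightarrow> bool" where
  "eventually_positive n W \<longleftrightarrow>
     (\<exists>t0::nat. \<forall>t\<ge>t0. \<forall>i<n. \<forall>j<n. (W ^\<^sub>m t) $$ (i, j) > 0)"

definition eventually_stochastic :: "nat \<Rightarrow> real mat \<Rightarrow> bool" where
  "eventually_stochastic n W \<longleftrightarrow>
     eventually_positive n W \<and> W *\<^sub>v ones_vec n = ones_vec n"

definition one_simple_strictly_dominant :: "real mat \<Rightarrow> bool" where
  "one_simple_strictly_dominant W \<longleftrightarrow>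
     (let Wc = map_mat complex_of_real W in
        order 1 (char_poly Wc) = 1 \<and>
        (\<forall>z. eigenvalue Wc z \<and> z \<noteq> 1 \<longrightarrow> cmod z < 1))"

definition permutation_mat :: "nat \<Rightarrow> real mat \<Rightarrow> bool" where
  "permutation_mat n P \<longleftrightarrow> P \<in> carrier_mat n n \<and>
     (\<forall>i<n. \<forall>j<n. P $$ (i, j) = 0 \<or> P $$ (i, j) = 1) \<and>
     (\<forall>i<n. \<exists>!j. j < n \<and> P $$ (i, j) = 1) \<and>
     (\<forall>j<n. \<exists>!i. i < n \<and> P $$ (i, j) = 1)"

definition reducible_mat :: "nat \<Rightarrow> real mat \<Rightarrow> bool" where
  "reducible_mat n W \<longleftrightarrow>
     (\<exists>P k. permutation_mat n P \<and> 0 < k \<and> k < n \<and>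
        (\<forall>i j. k \<le> i \<and> i < n \<and> j < k \<longrightarrow>
           (transpose_mat P * W * P) $$ (i, j) = 0))"

definition irreducible_mat :: "nat \<Rightarrow> real mat \<Rightarrow> bool" where
  "irreducible_mat n W \<longleftrightarrow> \<not> reducible_mat n W"

end

theory Submission
  imports Defs "Jordan_Normal_Form.Schur_Decomposition"
begin

(* If W is reducible, a simultaneous permutation of rows and columns brings it to the block
   upper triangular form [A C; 0 D]. The rows of the lower block then form an index set that W
   never leaves: no power W^t has a nonzero entry from it to its complement, so W is not
   eventually positive. If in addition all row and column sums of W are 1, then the column sums
   of A and the row sums of D are 1, so 1 is an eigenvalue of both diagonal blocks and hence a
   root of multiplicity at least two of char_poly W = char_poly A * char_poly D. *)

definition perm_mat :: "nat \<Rightarrow> (nat \<Rightarrow> nat) \<Rightarrow> 'a :: zero_neq_one mat" where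
  "perm_mat n \<sigma> = mat n n (\<lambda>(i, j). of_bool (i = \<sigma> j))"

lemma perm_mat_carrier [simp]: "perm_mat n \<sigma> \<in> carrier_mat n n"
  and dim_row_perm_mat [simp]: "dim_row (perm_mat n \<sigma>) = n"
  and dim_col_perm_mat [simp]: "dim_col (perm_mat n \<sigma>) = n"
  by (simp_all add: perm_mat_def)

lemma transpose_perm_mat_mult:
  fixes M :: "'a :: comm_ring_1 mat"
  assumes \<sigma>: "bij_betw \<sigma> {..<n} {..<n}" and M: "M \<in> carrier_mat n m" and i: "i < n" and j: "j < m"
  shows "(transpose_mat (perm_mat n \<sigma>) * M) $$ (i, j) = M $$ (\<sigma> i, j)"
proof -
  have "\<sigma> i < n" using \<sigma> i by (auto dest: bij_betw_apply)
  then show ?thesis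
    using M i j by (simp add: perm_mat_def scalar_prod_def atLeast0LessThan Int_insert_right)
qed

lemma mult_perm_mat:
  fixes M :: "'a :: comm_ring_1 mat"
  assumes \<sigma>: "bij_betw \<sigma> {..<n} {..<n}" and M: "M \<in> carrier_mat m n" and i: "i < m" and j: "j < n"
  shows "(M * perm_mat n \<sigma>) $$ (i, j) = M $$ (i, \<sigma> j)"
proof -
  have "\<sigma> j < n" using \<sigma> j by (auto dest: bij_betw_apply)
  then show ?thesis
    using M i j by (simp add: perm_mat_def scalar_prod_def atLeast0LessThan Int_insert_right)
qed

lemma perm_mat_conj_entry:
  fixes M :: "'a :: comm_ring_1 mat"
  assumes \<sigma>: "bij_betw \<sigma> {..<n} {..<n}" and M: "M \<in> carrier_mat n n" and i: "i < n" and j: "j < n"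
  shows "(transpose_mat (perm_mat n \<sigma>) * M * perm_mat n \<sigma>) $$ (i, j) = M $$ (\<sigma> i, \<sigma> j)"
proof -
  have PM: "transpose_mat (perm_mat n \<sigma>) * M \<in> carrier_mat n n"
    using M by (intro mult_carrier_mat[of _ n n]) auto
  have "(transpose_mat (perm_mat n \<sigma>) * M * perm_mat n \<sigma>) $$ (i, j)
      = (transpose_mat (perm_mat n \<sigma>) * M) $$ (i, \<sigma> j)"
    by (rule mult_perm_mat[OF \<sigma> PM i j])
  also have "\<dots> = M $$ (\<sigma> i, \<sigma> j)"
    using transpose_perm_mat_mult[OF \<sigma> M i] bij_betw_apply[OF \<sigma>] j by simp
  finally show ?thesis .
qed

lemma transpose_perm_mat_mult_self:
  assumes \<sigma>: "bij_betw \<sigma> {..<n} {..<n}"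
  shows "transpose_mat (perm_mat n \<sigma>) * perm_mat n \<sigma> = (1\<^sub>m n :: 'a :: comm_ring_1 mat)"
proof (rule eq_matI)
  fix i j assume "i < dim_row (1\<^sub>m n :: 'a mat)" "j < dim_col (1\<^sub>m n :: 'a mat)"
  then have i: "i < n" and j: "j < n" by auto
  have "(transpose_mat (perm_mat n \<sigma>) * perm_mat n \<sigma>) $$ (i, j) = (perm_mat n \<sigma> :: 'a mat) $$ (\<sigma> i, j)"
    by (rule transpose_perm_mat_mult[OF \<sigma> perm_mat_carrier i j])
  also have "\<dots> = of_bool (i = j)"
    using \<sigma> i j bij_betw_apply[OF \<sigma>] by (auto simp: perm_mat_def bij_betw_def inj_on_def)
  finally show "(transpose_mat (perm_mat n \<sigma>) * perm_mat n \<sigma>) $$ (i, j) = (1\<^sub>m n :: 'a mat) $$ (i, j)"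
    using i j by simp
qed auto

lemma char_poly_perm_mat_conj:
  fixes M :: "'a :: field mat"
  assumes \<sigma>: "bij_betw \<sigma> {..<n} {..<n}" and M: "M \<in> carrier_mat n n"
  shows "char_poly (transpose_mat (perm_mat n \<sigma>) * M * perm_mat n \<sigma>) = char_poly M"
proof -
  let ?P = "perm_mat n \<sigma> :: 'a mat"
  have PT: "transpose_mat ?P * ?P = 1\<^sub>m n" by (rule transpose_perm_mat_mult_self[OF \<sigma>])
  have "transpose_mat ?P \<in> carrier_mat n n" by simp
  from mat_mult_left_right_inverse[OF this perm_mat_carrier PT]
  have TP: "?P * transpose_mat ?P = 1\<^sub>m n" .
  have "similar_mat_wit (transpose_mat ?P * M * ?P) M (transpose_mat ?P) ?P"
    unfolding similar_mat_wit_def Let_def using M PT TP by auto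
  then show ?thesis
    unfolding similar_mat_def by (blast intro: char_poly_similar[unfolded similar_mat_def])
qed

lemma permutation_mat_eq_perm_mat:
  assumes P: "permutation_mat n P"
  obtains \<sigma> where "bij_betw \<sigma> {..<n} {..<n}" and "P = perm_mat n \<sigma>"
proof -
  have carrier: "P \<in> carrier_mat n n"
    and entries: "\<And>i j. i < n \<Longrightarrow> j < n \<Longrightarrow> P $$ (i, j) = 0 \<or> P $$ (i, j) = 1"
    and row: "\<And>i. i < n \<Longrightarrow> \<exists>!j. j < n \<and> P $$ (i, j) = 1"
    and col: "\<And>j. j < n \<Longrightarrow> \<exists>!i. i < n \<and> P $$ (i, j) = 1"
    using P unfolding permutation_mat_def by simp_all
  define \<sigma> where "\<sigma> j = (THE i. i < n \<and> P $$ (i, j) = 1)" for j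
  have \<sigma>: "\<sigma> j < n \<and> P $$ (\<sigma> j, j) = 1" if "j < n" for j
    unfolding \<sigma>_def using theI'[OF col[OF that]] .
  have \<sigma>_unique: "i = \<sigma> j" if "i < n" "j < n" "P $$ (i, j) = 1" for i j
    unfolding \<sigma>_def using that by (intro the1_equality[OF col, symmetric]) auto
  have "inj_on \<sigma> {..<n}"
  proof (rule inj_onI)
    fix j j' assume j: "j \<in> {..<n}" and j': "j' \<in> {..<n}" and eq: "\<sigma> j = \<sigma> j'"
    have "P $$ (\<sigma> j, j) = 1" "\<sigma> j < n" using \<sigma> j by auto
    moreover have "P $$ (\<sigma> j, j') = 1" unfolding eq using \<sigma> j' by auto
    ultimately show "j = j'" using row[of "\<sigma> j"] j j' by auto
  qed
  moreover have "\<sigma> ` {..<n} \<subseteq> {..<n}" using \<sigma> by auto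
  ultimately have bij: "bij_betw \<sigma> {..<n} {..<n}"
    by (simp add: bij_betw_def endo_inj_surj)
  have "P $$ (i, j) = of_bool (i = \<sigma> j)" if "i < n" "j < n" for i j
  proof (cases "i = \<sigma> j")
    case False
    then have "P $$ (i, j) \<noteq> 1" using \<sigma>_unique that by blast
    then show ?thesis using entries[OF that] False by simp
  qed (use \<sigma>[OF \<open>j < n\<close>] in simp)
  then have "P = perm_mat n \<sigma>"
    using carrier by (intro eq_matI) (auto simp: perm_mat_def)
  with bij show thesis by (rule that)
qed

lemma reducible_matE:
  assumes "reducible_mat n W" and W: "W \<in> carrier_mat n n"
  obtains \<sigma> k where "bij_betw \<sigma> {..<n} {..<n}" and "0 < k" and "k < n"
    and "\<And>i j. k \<le> i \<Longrightarrow> i < n \<Longrightarrow> j < k \<Longrightarrow> W $$ (\<sigma> i, \<sigma> j) = 0"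
proof -
  obtain P k where P: "permutation_mat n P" and k: "0 < k" "k < n"
    and block: "\<And>i j. k \<le> i \<Longrightarrow> i < n \<Longrightarrow> j < k \<Longrightarrow> (transpose_mat P * W * P) $$ (i, j) = 0"
    using assms(1) unfolding reducible_mat_def by blast
  obtain \<sigma> where \<sigma>: "bij_betw \<sigma> {..<n} {..<n}" and P_eq: "P = perm_mat n \<sigma>"
    using permutation_mat_eq_perm_mat[OF P] .
  have "W $$ (\<sigma> i, \<sigma> j) = 0" if "k \<le> i" "i < n" "j < k" for i j
  proof -
    have "j < n" using that k by simp
    then have "W $$ (\<sigma> i, \<sigma> j) = (transpose_mat P * W * P) $$ (i, j)"
      unfolding P_eq using perm_mat_conj_entry[OF \<sigma> W \<open>i < n\<close>] by simp
    with block that show ?thesis by simp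
  qed
  with \<sigma> k show thesis by (rule that)
qed

lemma pow_mat_entry_eq_0_if_closed:
  fixes W :: "'a :: semiring_1 mat"
  assumes W: "W \<in> carrier_mat n n"
    and closed: "\<And>i j. i \<in> S \<Longrightarrow> j < n \<Longrightarrow> j \<notin> S \<Longrightarrow> W $$ (i, j) = 0"
    and i: "i \<in> S" "i < n"
  shows "j < n \<Longrightarrow> j \<notin> S \<Longrightarrow> (W ^\<^sub>m t) $$ (i, j) = 0"
proof (induction t arbitrary: j)
  case 0
  then have "i \<noteq> j" using i by auto
  with 0 i W show ?case by simp
next
  case (Suc t)
  have "(W ^\<^sub>m Suc t) $$ (i, j) = (\<Sum>l<n. (W ^\<^sub>m t) $$ (i, l) * W $$ (l, j))"
    using W i Suc.prems by (simp add: scalar_prod_def atLeast0LessThan)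
  also have "\<dots> = 0"
    using Suc closed by (intro sum.neutral) (metis lessThan_iff mult_zero_left mult_zero_right)
  finally show ?case .
qed

lemma reducible_not_eventually_positive:
  assumes "reducible_mat n W" and W: "W \<in> carrier_mat n n"
  shows "\<not> eventually_positive n W"
proof
  obtain \<sigma> k where \<sigma>: "bij_betw \<sigma> {..<n} {..<n}" and k: "0 < k" "k < n"
    and block: "\<And>i j. k \<le> i \<Longrightarrow> i < n \<Longrightarrow> j < k \<Longrightarrow> W $$ (\<sigma> i, \<sigma> j) = 0"
    using reducible_matE[OF assms] by blast
  define S where "S = \<sigma> ` {k..<n}"
  have closed: "W $$ (i, j) = 0" if "i \<in> S" "j < n" "j \<notin> S" for i j
  proof -
    obtain a where "k \<le> a" "a < n" "i = \<sigma> a" using \<open>i \<in> S\<close> unfolding S_def by auto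
    moreover obtain b where "b < n" "j = \<sigma> b"
      using \<open>j < n\<close> \<sigma> by (metis bij_betw_iff_bijections lessThan_iff)
    moreover from this \<open>j \<notin> S\<close> have "b < k" unfolding S_def by auto
    ultimately show ?thesis using block by blast
  qed
  have "\<sigma> k \<in> S" "\<sigma> k < n" "\<sigma> 0 < n"
    using k bij_betw_apply[OF \<sigma>] by (auto simp: S_def)
  moreover have "\<sigma> 0 \<notin> S"
    using \<sigma> k unfolding S_def bij_betw_def inj_on_def by fastforce
  ultimately have "(W ^\<^sub>m t) $$ (\<sigma> k, \<sigma> 0) = 0" for t
    using pow_mat_entry_eq_0_if_closed[OF W closed] by blast
  moreover assume "eventually_positive n W"
  ultimately show False
    using \<open>\<sigma> k < n\<close> \<open>\<sigma> 0 < n\<close> unfolding eventually_positive_def by (metis le_refl less_irrefl)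
qed

lemma sum_lessThan_split:
  fixes f :: "nat \<Rightarrow> 'a :: comm_monoid_add"
  assumes "k \<le> n"
  shows "(\<Sum>j<n. f j) = (\<Sum>j<k. f j) + (\<Sum>j<n - k. f (j + k))"
proof -
  have "(\<Sum>j<n. f j) = (\<Sum>j<k. f j) + (\<Sum>j\<in>{k..<n}. f j)"
    using assms by (simp add: atLeast0LessThan[symmetric] sum.atLeastLessThan_concat)
  also have "(\<Sum>j\<in>{k..<n}. f j) = (\<Sum>j<n - k. f (j + k))"
    using assms sum.shift_bounds_nat_ivl[of f 0 k "n - k"] by (simp add: atLeast0LessThan)
  finally show ?thesis .
qed

lemma mult_ones_vec_index:
  assumes "W \<in> carrier_mat m n" and "i < m"
  shows "(W *\<^sub>v ones_vec n) $ i = (\<Sum>j<n. W $$ (i, j))"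
  using assms by (simp add: ones_vec_def scalar_prod_def atLeast0LessThan)

lemma eigenvalue_if_row_sums_eq:
  fixes A :: "'a :: field mat"
  assumes A: "A \<in> carrier_mat m m" and "0 < m" and rows: "\<And>i. i < m \<Longrightarrow> (\<Sum>j<m. A $$ (i, j)) = c"
  shows "eigenvalue A c"
proof -
  let ?v = "vec m (\<lambda>_. 1) :: 'a vec"
  have "?v \<noteq> 0\<^sub>v m"
    using \<open>0 < m\<close> by (metis index_vec index_zero_vec(1) zero_neq_one)
  moreover have "A *\<^sub>v ?v = c \<cdot>\<^sub>v ?v"
    using A rows by (intro eq_vecI) (auto simp: scalar_prod_def atLeast0LessThan)
  ultimately have "eigenvector A ?v c"
    using A unfolding eigenvector_def by auto
  then show ?thesis unfolding eigenvalue_def by blast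
qed

lemma eigenvalue_transpose_mat_iff:
  fixes A :: "'a :: field mat"
  assumes A: "A \<in> carrier_mat m m"
  shows "eigenvalue (transpose_mat A) c \<longleftrightarrow> eigenvalue A c"
  using A by (simp add: eigenvalue_root_char_poly[of _ m])

lemma eigenvalue_if_col_sums_eq:
  fixes A :: "'a :: field mat"
  assumes A: "A \<in> carrier_mat m m" and "0 < m" and cols: "\<And>j. j < m \<Longrightarrow> (\<Sum>i<m. A $$ (i, j)) = c"
  shows "eigenvalue A c"
proof -
  have "eigenvalue (transpose_mat A) c"
    using A cols \<open>0 < m\<close> by (intro eigenvalue_if_row_sums_eq[of _ m]) auto
  then show ?thesis using eigenvalue_transpose_mat_iff[OF A] by simp
qed

lemma order_char_poly_block_triangular:
  fixes A D :: "complex mat"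
  assumes A: "A \<in> carrier_mat k k" and C: "C \<in> carrier_mat k m" and D: "D \<in> carrier_mat m m"
    and "eigenvalue A \<mu>" and "eigenvalue D \<mu>"
  shows "2 \<le> Polynomial.order \<mu> (char_poly (four_block_mat A C (0\<^sub>m m k) D))"
proof -
  have split: "char_poly (four_block_mat A C (0\<^sub>m m k) D) = char_poly A * char_poly D"
    using char_poly_factorized[OF A] char_poly_factorized[OF D]
    by (intro char_poly_0_block[OF refl _ _ A C D]) auto
  have "char_poly A \<noteq> 0" "char_poly D \<noteq> 0"
    using degree_monic_char_poly[OF A] degree_monic_char_poly[OF D] by auto
  moreover have "Polynomial.order \<mu> (char_poly A) \<noteq> 0" "Polynomial.order \<mu> (char_poly D) \<noteq> 0"
    using assms calculation by (simp_all add: eigenvalue_root_char_poly Polynomial.order_root)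
  ultimately show ?thesis
    unfolding split by (simp add: Polynomial.order_mult)
qed

lemma two_le_order_one_char_poly_if_block_balanced:
  fixes B :: "complex mat"
  assumes B: "B \<in> carrier_mat n n" and k: "0 < k" "k < n"
    and block: "\<And>i j. k \<le> i \<Longrightarrow> i < n \<Longrightarrow> j < k \<Longrightarrow> B $$ (i, j) = 0"
    and rows: "\<And>i. i < n \<Longrightarrow> (\<Sum>j<n. B $$ (i, j)) = 1"
    and cols: "\<And>j. j < n \<Longrightarrow> (\<Sum>i<n. B $$ (i, j)) = 1"
  shows "2 \<le> Polynomial.order 1 (char_poly B)"
proof -
  define m where "m = n - k"
  define A where "A = mat k k (\<lambda>ij. B $$ ij)"
  define C where "C = mat k m (\<lambda>(i, j). B $$ (i, j + k))"
  define D where "D = mat m m (\<lambda>(i, j). B $$ (i + k, j + k))"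
  have n: "n = k + m" and "0 < m" using k by (auto simp: m_def)
  have "mat m k (\<lambda>(i, j). B $$ (i + k, j)) = 0\<^sub>m m k"
    using block n by (intro eq_matI) auto
  then have "split_block B k k = (A, C, 0\<^sub>m m k, D)"
    using B unfolding split_block_def Let_def A_def C_def D_def m_def by simp
  from split_block[OF this] B n
  have A: "A \<in> carrier_mat k k" and C: "C \<in> carrier_mat k m" and D: "D \<in> carrier_mat m m"
    and B_eq: "B = four_block_mat A C (0\<^sub>m m k) D" by auto
  have "eigenvalue A 1"
  proof (rule eigenvalue_if_col_sums_eq[OF A \<open>0 < k\<close>])
    fix j assume "j < k"
    have "(\<Sum>i<n. B $$ (i, j)) = (\<Sum>i<k. B $$ (i, j)) + (\<Sum>i<m. B $$ (i + k, j))"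
      using sum_lessThan_split[of k n] k unfolding m_def by simp
    also have "(\<Sum>i<m. B $$ (i + k, j)) = 0"
      using block n \<open>j < k\<close> by simp
    finally show "(\<Sum>i<k. A $$ (i, j)) = 1"
      using cols[of j] \<open>j < k\<close> k by (simp add: A_def)
  qed
  moreover have "eigenvalue D 1"
  proof (rule eigenvalue_if_row_sums_eq[OF D \<open>0 < m\<close>])
    fix i assume "i < m"
    have "(\<Sum>j<n. B $$ (i + k, j)) = (\<Sum>j<k. B $$ (i + k, j)) + (\<Sum>j<m. B $$ (i + k, j + k))"
      using sum_lessThan_split[of k n] k unfolding m_def by simp
    also have "(\<Sum>j<k. B $$ (i + k, j)) = 0"
      using block n \<open>i < m\<close> by simp
    finally show "(\<Sum>j<m. D $$ (i, j)) = 1"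
      using rows[of "i + k"] \<open>i < m\<close> n by (simp add: D_def)
  qed
  ultimately show ?thesis
    unfolding B_eq by (rule order_char_poly_block_triangular[OF A C D])
qed

lemma two_le_order_one_char_poly_if_reducible_balanced:
  fixes W :: "real mat"
  assumes W: "W \<in> carrier_mat n n" and reducible: "reducible_mat n W"
    and rows: "W *\<^sub>v ones_vec n = ones_vec n"
    and cols: "transpose_mat W *\<^sub>v ones_vec n = ones_vec n"
  shows "2 \<le> Polynomial.order 1 (char_poly (map_mat complex_of_real W))"
proof -
  obtain \<sigma> k where \<sigma>: "bij_betw \<sigma> {..<n} {..<n}" and k: "0 < k" "k < n"
    and block: "\<And>i j. k \<le> i \<Longrightarrow> i < n \<Longrightarrow> j < k \<Longrightarrow> W $$ (\<sigma> i, \<sigma> j) = 0"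
    using reducible_matE[OF reducible W] by blast
  let ?Wc = "map_mat complex_of_real W"
  let ?P = "perm_mat n \<sigma> :: complex mat"
  define B where "B = transpose_mat ?P * ?Wc * ?P"
  have Wc: "?Wc \<in> carrier_mat n n" using W by simp
  have B_carrier: "B \<in> carrier_mat n n"
    unfolding B_def using Wc by (intro mult_carrier_mat[of _ n n]) auto
  have B_entry: "B $$ (i, j) = of_real (W $$ (\<sigma> i, \<sigma> j))" if "i < n" "j < n" for i j
    unfolding B_def using perm_mat_conj_entry[OF \<sigma> Wc that] bij_betw_apply[OF \<sigma>] that W by simp
  have W_rows: "(\<Sum>j<n. W $$ (i, j)) = 1" if "i < n" for i
    using mult_ones_vec_index[OF W that] rows that by (simp add: ones_vec_def)
  have W_cols: "(\<Sum>i<n. W $$ (i, j)) = 1" if "j < n" for j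
  proof -
    have "(\<Sum>i<n. W $$ (i, j)) = (transpose_mat W *\<^sub>v ones_vec n) $ j"
      using mult_ones_vec_index[of "transpose_mat W" n n j] W that by simp
    also have "\<dots> = 1" using cols that by (simp add: ones_vec_def)
    finally show ?thesis .
  qed
  have "(\<Sum>j<n. B $$ (i, j)) = 1" if "i < n" for i
  proof -
    have "(\<Sum>j<n. B $$ (i, j)) = of_real (\<Sum>j<n. W $$ (\<sigma> i, \<sigma> j))"
      using that by (simp add: B_entry)
    also have "(\<Sum>j<n. W $$ (\<sigma> i, \<sigma> j)) = (\<Sum>j<n. W $$ (\<sigma> i, j))"
      by (rule sum.reindex_bij_betw[OF \<sigma>])
    also have "\<dots> = 1" using W_rows bij_betw_apply[OF \<sigma>] that by simp
    finally show ?thesis by simp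
  qed
  moreover have "(\<Sum>i<n. B $$ (i, j)) = 1" if "j < n" for j
  proof -
    have "(\<Sum>i<n. B $$ (i, j)) = of_real (\<Sum>i<n. W $$ (\<sigma> i, \<sigma> j))"
      using that by (simp add: B_entry)
    also have "(\<Sum>i<n. W $$ (\<sigma> i, \<sigma> j)) = (\<Sum>i<n. W $$ (i, \<sigma> j))"
      by (rule sum.reindex_bij_betw[OF \<sigma>])
    also have "\<dots> = 1" using W_cols bij_betw_apply[OF \<sigma>] that by simp
    finally show ?thesis by simp
  qed
  moreover have "B $$ (i, j) = 0" if "k \<le> i" "i < n" "j < k" for i j
    using B_entry block that k by simp
  ultimately have "2 \<le> Polynomial.order 1 (char_poly B)"
    using two_le_order_one_char_poly_if_block_balanced[OF B_carrier k] by blast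
  then show ?thesis
    unfolding B_def char_poly_perm_mat_conj[OF \<sigma> Wc] .
qed

theorem lemma7:
  fixes W :: "real mat" and n :: nat
  assumes "W \<in> carrier_mat n n"
    and "W *\<^sub>v ones_vec n = ones_vec n"
    and "eventually_stochastic n W \<or>
         (transpose_mat W *\<^sub>v ones_vec n = ones_vec n \<and> one_simple_strictly_dominant W)"
  shows "irreducible_mat n W"
  unfolding irreducible_mat_def
proof
  assume reducible: "reducible_mat n W"
  from assms(3) show False
  proof
    assume "eventually_stochastic n W"
    then show False
      using reducible_not_eventually_positive[OF reducible assms(1)]
      unfolding eventually_stochastic_def by blast
  next
    assume "transpose_mat W *\<^sub>v ones_vec n = ones_vec n \<and> one_simple_strictly_dominant W"
    then show False
      using two_le_order_one_char_poly_if_reducible_balanced[OF assms(1) reducible assms(2)]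
      unfolding one_simple_strictly_dominant_def Let_def by auto
  qed
qed

end
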